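(* Let $A=(A_j)_{j=0}^{d-1}$ be an injective MPS tensor of bond dimension $D$ in left canonical form, let $u$ be a $d\times d$ unitary matrix, and let $\mathbb{E}_u=\sum_{j,k=0}^{d-1} u_{jk}\, A_k\otimes \overline{A_j}$. Then $\mathbb{E}_u$ has an eigenvalue of modulus $1$ if and only if there exist a unitary $D\times D$ matrix $v$ and an angle $\theta$ such that for all $j\in\{0,\dots,d-1\}$, $$\sum_{k=0}^{d-1}u_{jk}A_k = e^{i\theta}\, v A_j v^\dagger .$$
   Context: An MPS tensor of physical dimension $d$ and bond dimension $D$ is a collection of complex $D\times D$ matrices $A_0,\dots,A_{d-1}$. It is in left canonical form if $\sum_{j=0}^{d-1}A_j^\dagger A_j=\mathbb{1}_{D}$. Its transfer matrix is $\mathbb{E}=\sum_{j}A_j\otimes\overline{A_j}$. The tensor (in left canonical form) is called injective if $1$ is a non-degenerate eigenvalue of the transfer matrix whose left eigenvector is the identity $\mathbb{1}_D$ (unique up to scaling, i.e. the only solution of $\sum_jA_j^\dagger XA_j=X$ is $X\propto\mathbb{1}$), all other eigenvalues of $\mathbb{E}$ have modulus strictly less than $1$, and there is a unique, full-rank density matrix $\rho$ with $\sum_j A_j\rho A_j^\dagger=\rho$. (All eigenvalues of $\mathbb{E}_u$ have modulus at most $1$.) *)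

theory Defs
  imports "Jordan_Normal_Form.Jordan_Normal_Form"
begin

text \<open>Complex matrices are Jordan_Normal_Form matrices of type complex mat,
  with explicit dimensions. An MPS tensor is a family A 0, ..., A (d-1) of
  D x D matrices, given as a function on nat.\<close>

definition cadj :: "complex mat \<Rightarrow> complex mat" where
  "cadj M = mat (dim_col M) (dim_row M) (\<lambda>(i,j). cnj (M $$ (j,i)))"

definition cconj :: "complex mat \<Rightarrow> complex mat" where
  "cconj M = map_mat cnj M"

text \<open>Kronecker product, with the standard row/column indexing (i1,i2) <-> i1 * n2 + i2.\<close>
definition kron :: "complex mat \<Rightarrow> complex mat \<Rightarrow> complex mat" where
  "kron X Y = mat (dim_row X * dim_row Y) (dim_col X * dim_col Y)
     (\<lambda>(i,j). X $$ (i div dim_row Y, j div dim_col Y) * Y $$ (i mod dim_row Y, j mod dim_col Y))"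

definition msum :: "nat \<Rightarrow> nat \<Rightarrow> nat \<Rightarrow> (nat \<Rightarrow> complex mat) \<Rightarrow> complex mat" where
  "msum n m d f = mat n m (\<lambda>(i,j). \<Sum>k<d. f k $$ (i,j))"

definition unitary_cmat :: "nat \<Rightarrow> complex mat \<Rightarrow> bool" where
  "unitary_cmat n U \<longleftrightarrow> U \<in> carrier_mat n n \<and> cadj U * U = 1\<^sub>m n \<and> U * cadj U = 1\<^sub>m n"

definition mps_tensor :: "nat \<Rightarrow> nat \<Rightarrow> (nat \<Rightarrow> complex mat) \<Rightarrow> bool" where
  "mps_tensor d D A \<longleftrightarrow> (\<forall>j<d. A j \<in> carrier_mat D D)"

definition left_canonical :: "nat \<Rightarrow> nat \<Rightarrow> (nat \<Rightarrow> complex mat) \<Rightarrow> bool" where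
  "left_canonical d D A \<longleftrightarrow> msum D D d (\<lambda>j. cadj (A j) * A j) = 1\<^sub>m D"

definition transfer :: "nat \<Rightarrow> nat \<Rightarrow> (nat \<Rightarrow> complex mat) \<Rightarrow> complex mat" where
  "transfer d D A = msum (D*D) (D*D) d (\<lambda>j. kron (A j) (cconj (A j)))"

definition transfer_u :: "nat \<Rightarrow> nat \<Rightarrow> complex mat \<Rightarrow> (nat \<Rightarrow> complex mat) \<Rightarrow> complex mat" where
  "transfer_u d D u A = msum (D*D) (D*D) d
     (\<lambda>j. msum (D*D) (D*D) d (\<lambda>k. u $$ (j,k) \<cdot>\<^sub>m kron (A k) (cconj (A j))))"

definition ctrace :: "complex mat \<Rightarrow> complex" where
  "ctrace M = (\<Sum>i<dim_row M. M $$ (i,i))"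

definition density_mat :: "nat \<Rightarrow> complex mat \<Rightarrow> bool" where
  "density_mat D \<rho> \<longleftrightarrow> \<rho> \<in> carrier_mat D D \<and> cadj \<rho> = \<rho>
     \<and> (\<forall>v \<in> carrier_vec D. 0 \<le> Re (conjugate v \<bullet> (\<rho> *\<^sub>v v)))
     \<and> ctrace \<rho> = 1"

definition injective_mps :: "nat \<Rightarrow> nat \<Rightarrow> (nat \<Rightarrow> complex mat) \<Rightarrow> bool" where
  "injective_mps d D A \<longleftrightarrow>
     left_canonical d D A
     \<and> eigenvalue (transfer d D A) 1
     \<and> order 1 (char_poly (transfer d D A)) = 1
     \<and> (\<forall>X \<in> carrier_mat D D. msum D D d (\<lambda>j. cadj (A j) * X * A j) = X
            \<longrightarrow> (\<exists>c. X = c \<cdot>\<^sub>m 1\<^sub>m D))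
     \<and> (\<forall>z. eigenvalue (transfer d D A) z \<and> z \<noteq> 1 \<longrightarrow> cmod z < 1)
     \<and> (\<exists>\<rho>. density_mat D \<rho> \<and> msum D D d (\<lambda>j. A j * \<rho> * cadj (A j)) = \<rho> \<and> det \<rho> \<noteq> 0
          \<and> (\<forall>\<sigma>. density_mat D \<sigma> \<and> msum D D d (\<lambda>j. A j * \<sigma> * cadj (A j)) = \<sigma> \<longrightarrow> \<sigma> = \<rho>))"

end

theory Submission
  imports Defs
begin

text \<open>Write B j = (\<Sum>k. u(j,k) A k). Under vectorization E_u acts on D x D matrices as
  X \<mapsto> (\<Sum>j. B j X (A j)\<dagger>), and its transpose as Y \<mapsto> (\<Sum>j. (A j)\<dagger> Y B j).
  If B j = exp(i \<theta>) v A j v\<dagger>, then v \<rho> is an eigenmatrix of the first map for exp(i \<theta>), where \<rho> is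
  the fixed density matrix of A.

  Conversely let Y \<noteq> 0 satisfy (\<Sum>j. (A j)\<dagger> Y B j) = z Y with |z| = 1. Being a unitary mixing of the
  A j, the B j define the same channel and the same dual channel as the A j. Expanding
  (\<Sum>j. tr(R j \<rho> (R j)\<dagger>)) for R j = Y B j - z A j Y with these facts and left canonicity gives 0, and
  \<rho> is positive definite, so Y B j = z A j Y. Consequently Y\<dagger> Y is a fixed point of the dual channel,
  hence a multiple of the identity by injectivity; so Y is a multiple of a unitary w, and
  B j = z w\<dagger> A j w.\<close>

lemma cadj_carrier [simp]: "M \<in> carrier_mat n m \<Longrightarrow> cadj M \<in> carrier_mat m n"
  unfolding cadj_def by auto

lemma cadj_dims [simp]: "dim_row (cadj M) = dim_col M" "dim_col (cadj M) = dim_row M"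
  unfolding cadj_def by auto

lemma index_cadj [simp]: "i < dim_col M \<Longrightarrow> j < dim_row M \<Longrightarrow> cadj M $$ (i,j) = cnj (M $$ (j,i))"
  unfolding cadj_def by auto

lemma cadj_cadj [simp]: "cadj (cadj M) = M"
  by (intro eq_matI) auto

lemma cadj_mult:
  assumes "M \<in> carrier_mat n m" "N \<in> carrier_mat m p"
  shows "cadj (M * N) = cadj N * cadj M"
  using assms by (intro eq_matI) (auto simp: scalar_prod_def intro!: sum.cong)

lemma cadj_smult: "cadj (c \<cdot>\<^sub>m M) = cnj c \<cdot>\<^sub>m cadj M"
  by (intro eq_matI) auto

lemma one_smult_mat [simp]: "1 \<cdot>\<^sub>m M = (M :: 'a :: monoid_mult mat)"
  by (intro eq_matI) auto

lemma smult_smult_mat: "a \<cdot>\<^sub>m (b \<cdot>\<^sub>m M) = (a * b) \<cdot>\<^sub>m (M :: 'a :: semigroup_mult mat)"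
  by (intro eq_matI) (auto simp: mult.assoc)

lemma mult_carrier_mat_square:
  "M \<in> carrier_mat n n \<Longrightarrow> N \<in> carrier_mat n n \<Longrightarrow> M * N \<in> carrier_mat n n"
  by simp

lemma diff_eq_0_mat_imp_eq:
  fixes X Z :: "'a :: ab_group_add mat"
  assumes "X \<in> carrier_mat m n" "Z \<in> carrier_mat m n" "X - Z = 0\<^sub>m m n"
  shows "X = Z"
proof (rule eq_matI)
  fix i k assume ik: "i < dim_row Z" "k < dim_col Z"
  then have "(X - Z) $$ (i,k) = 0"
    using assms by simp
  then show "X $$ (i,k) = Z $$ (i,k)"
    using assms(1,2) ik by (simp add: right_minus_eq)
qed (use assms in auto)


lemma msum_carrier [simp]: "msum n m d f \<in> carrier_mat n m"
  unfolding msum_def by auto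

lemma msum_dims [simp]: "dim_row (msum n m d f) = n" "dim_col (msum n m d f) = m"
  unfolding msum_def by auto

lemma index_msum [simp]: "i < n \<Longrightarrow> k < m \<Longrightarrow> msum n m d f $$ (i,k) = (\<Sum>j<d. f j $$ (i,k))"
  unfolding msum_def by auto

lemma msum_cong: "(\<And>j. j < d \<Longrightarrow> f j = g j) \<Longrightarrow> msum n m d f = msum n m d g"
  unfolding msum_def by auto

lemma mult_msum_distrib_left:
  assumes "M \<in> carrier_mat n m" "\<And>j. j < d \<Longrightarrow> f j \<in> carrier_mat m p"
  shows "M * msum m p d f = msum n p d (\<lambda>j. M * f j)"
proof (rule eq_matI)
  fix i k assume "i < dim_row (msum n p d (\<lambda>j. M * f j))" "k < dim_col (msum n p d (\<lambda>j. M * f j))"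
  then have i: "i < n" and k: "k < p" by auto
  have "(M * msum m p d f) $$ (i,k) = (\<Sum>l<m. M $$ (i,l) * (\<Sum>j<d. f j $$ (l,k)))"
    using assms i k by (simp add: scalar_prod_def lessThan_atLeast0)
  also have "\<dots> = (\<Sum>j<d. \<Sum>l<m. M $$ (i,l) * f j $$ (l,k))"
    by (simp add: sum_distrib_left sum.swap[of _ "{..<m}"])
  also have "\<dots> = msum n p d (\<lambda>j. M * f j) $$ (i,k)"
    using assms(1) i k by (auto simp: scalar_prod_def lessThan_atLeast0 intro!: sum.cong dest!: assms(2))
  finally show "(M * msum m p d f) $$ (i,k) = msum n p d (\<lambda>j. M * f j) $$ (i,k)" .
qed (use assms in auto)

lemma msum_mult_distrib_right:
  assumes "M \<in> carrier_mat m p" "\<And>j. j < d \<Longrightarrow> f j \<in> carrier_mat n m"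
  shows "msum n m d f * M = msum n p d (\<lambda>j. f j * M)"
proof (rule eq_matI)
  fix i k assume "i < dim_row (msum n p d (\<lambda>j. f j * M))" "k < dim_col (msum n p d (\<lambda>j. f j * M))"
  then have i: "i < n" and k: "k < p" by auto
  have "(msum n m d f * M) $$ (i,k) = (\<Sum>l<m. (\<Sum>j<d. f j $$ (i,l)) * M $$ (l,k))"
    using assms i k by (simp add: scalar_prod_def lessThan_atLeast0)
  also have "\<dots> = (\<Sum>j<d. \<Sum>l<m. f j $$ (i,l) * M $$ (l,k))"
    by (simp add: sum_distrib_right sum.swap[of _ "{..<m}"])
  also have "\<dots> = msum n p d (\<lambda>j. f j * M) $$ (i,k)"
    using assms(1) i k by (auto simp: scalar_prod_def lessThan_atLeast0 intro!: sum.cong dest!: assms(2))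
  finally show "(msum n m d f * M) $$ (i,k) = msum n p d (\<lambda>j. f j * M) $$ (i,k)" .
qed (use assms in auto)

lemma smult_msum:
  assumes "\<And>j. j < d \<Longrightarrow> f j \<in> carrier_mat n m"
  shows "c \<cdot>\<^sub>m msum n m d f = msum n m d (\<lambda>j. c \<cdot>\<^sub>m f j)"
  by (intro eq_matI) (auto simp: sum_distrib_left intro!: sum.cong dest!: assms)

lemma index_mult_mult:
  assumes "P \<in> carrier_mat m n" "X \<in> carrier_mat n k" "Q \<in> carrier_mat k l" "p < m" "q < l"
  shows "(P * X * Q) $$ (p,q) = (\<Sum>a<n. \<Sum>b<k. P $$ (p,a) * X $$ (a,b) * Q $$ (b,q))"
  using assms
  by (simp add: scalar_prod_def lessThan_atLeast0 sum_distrib_left sum_distrib_right mult.assoc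
      sum.swap[of _ "{..<k}"])

lemma sum_swap3: "(\<Sum>a\<in>A. \<Sum>b\<in>B. \<Sum>j\<in>J. f a b j) = (\<Sum>j\<in>J. \<Sum>a\<in>A. \<Sum>b\<in>B. f a b j)"
proof -
  have "(\<Sum>a\<in>A. \<Sum>b\<in>B. \<Sum>j\<in>J. f a b j) = (\<Sum>a\<in>A. \<Sum>j\<in>J. \<Sum>b\<in>B. f a b j)"
    by (rule sum.cong[OF refl], rule sum.swap)
  also have "\<dots> = (\<Sum>j\<in>J. \<Sum>a\<in>A. \<Sum>b\<in>B. f a b j)"
    by (rule sum.swap)
  finally show ?thesis .
qed

lemma ctrace_mult_comm:
  assumes "M \<in> carrier_mat n m" "N \<in> carrier_mat m n"
  shows "ctrace (M * N) = ctrace (N * M)"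
  using assms unfolding ctrace_def
  by (simp add: scalar_prod_def lessThan_atLeast0 sum.swap[of _ "{0..<n}"] mult.commute)

lemma ctrace_smult: "M \<in> carrier_mat n n \<Longrightarrow> ctrace (c \<cdot>\<^sub>m M) = c * ctrace M"
  unfolding ctrace_def by (auto simp: sum_distrib_left)

lemma ctrace_msum:
  assumes "\<And>j. j < d \<Longrightarrow> f j \<in> carrier_mat n n"
  shows "ctrace (msum n n d f) = (\<Sum>j<d. ctrace (f j))"
proof -
  have "ctrace (f j) = (\<Sum>i<n. f j $$ (i,i))" if "j < d" for j
    using assms[OF that] unfolding ctrace_def by simp
  then show ?thesis
    unfolding ctrace_def by (simp add: sum.swap[of _ "{..<n}"])
qed

lemma sum_ctrace_mult:
  assumes "\<And>j. j < d \<Longrightarrow> K j \<in> carrier_mat n n" "Q \<in> carrier_mat n n"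
  shows "(\<Sum>j<d. ctrace (K j * Q)) = ctrace (msum n n d K * Q)"
proof -
  have "ctrace (msum n n d K * Q) = ctrace (msum n n d (\<lambda>j. K j * Q))"
    by (simp add: msum_mult_distrib_right[OF assms(2) assms(1)])
  also have "\<dots> = (\<Sum>j<d. ctrace (K j * Q))"
    using assms by (intro ctrace_msum) (simp add: mult_carrier_mat_square)
  finally show ?thesis ..
qed

lemma ctrace_rotate_right_mult:
  assumes "Y \<in> carrier_mat n n" "B \<in> carrier_mat n n" "R \<in> carrier_mat n n"
  shows "ctrace (Y * B * R * cadj (Y * B)) = ctrace (B * R * cadj B * (cadj Y * Y))"
proof -
  have "ctrace (Y * B * R * cadj (Y * B)) = ctrace (Y * (B * R * cadj B * cadj Y))"
    using assms by (simp add: cadj_mult[of Y n n B n] assoc_mult_mat[of _ n n _ n _ n]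
        mult_carrier_mat_square cadj_carrier[of _ n n])
  also have "\<dots> = ctrace (B * R * cadj B * cadj Y * Y)"
    using assms by (subst ctrace_mult_comm[of _ n n]) auto
  also have "\<dots> = ctrace (B * R * cadj B * (cadj Y * Y))"
    using assms by (simp add: assoc_mult_mat[of _ n n _ n _ n] mult_carrier_mat_square
        cadj_carrier[of _ n n])
  finally show ?thesis .
qed

lemma ctrace_rotate_mixed:
  assumes "Y \<in> carrier_mat n n" "B \<in> carrier_mat n n" "R \<in> carrier_mat n n" "A \<in> carrier_mat n n"
  shows "ctrace (Y * B * R * cadj (A * Y)) = ctrace (cadj A * Y * B * (R * cadj Y))"
proof -
  have "ctrace (Y * B * R * cadj (A * Y)) = ctrace (Y * B * R * cadj Y * cadj A)"
    using assms by (simp add: cadj_mult[of A n n Y n] assoc_mult_mat[of _ n n _ n _ n]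
        mult_carrier_mat_square cadj_carrier[of _ n n])
  also have "\<dots> = ctrace (cadj A * (Y * B * R * cadj Y))"
    using assms by (subst ctrace_mult_comm[of _ n n]) auto
  also have "\<dots> = ctrace (cadj A * Y * B * (R * cadj Y))"
    using assms by (simp add: assoc_mult_mat[of _ n n _ n _ n] mult_carrier_mat_square
        cadj_carrier[of _ n n])
  finally show ?thesis .
qed

lemma ctrace_rotate_left_mult:
  assumes "Y \<in> carrier_mat n n" "R \<in> carrier_mat n n" "A \<in> carrier_mat n n"
  shows "ctrace (A * Y * R * cadj (A * Y)) = ctrace (cadj A * A * (Y * R * cadj Y))"
proof -
  have "ctrace (A * Y * R * cadj (A * Y)) = ctrace (A * (Y * R * cadj Y * cadj A))"
    using assms by (simp add: cadj_mult[of A n n Y n] assoc_mult_mat[of _ n n _ n _ n]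
        mult_carrier_mat_square cadj_carrier[of _ n n])
  also have "\<dots> = ctrace (Y * R * cadj Y * (cadj A * A))"
    using assms ctrace_mult_comm[of A n n "Y * R * cadj Y * cadj A"]
    by (simp add: assoc_mult_mat[of _ n n _ n _ n] mult_carrier_mat_square
        cadj_carrier[of _ n n])
  also have "\<dots> = ctrace (cadj A * A * (Y * R * cadj Y))"
    using assms by (intro ctrace_mult_comm) auto
  finally show ?thesis .
qed

section \<open>The form tr(X \<rho> Z\<dagger>) of a faithful density matrix\<close>

definition herm_form :: "nat \<Rightarrow> complex mat \<Rightarrow> (nat \<Rightarrow> complex) \<Rightarrow> (nat \<Rightarrow> complex) \<Rightarrow> complex" where
  "herm_form n R x y = (\<Sum>a<n. \<Sum>b<n. cnj (x a) * R $$ (a,b) * y b)"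

lemma herm_form_cnj:
  assumes "R \<in> carrier_mat n n" "cadj R = R"
  shows "cnj (herm_form n R x y) = herm_form n R y x"
proof -
  have R: "cnj (R $$ (a,b)) = R $$ (b,a)" if "a < n" "b < n" for a b
    using assms that by (metis carrier_matD index_cadj)
  have "cnj (herm_form n R x y) = (\<Sum>a<n. \<Sum>b<n. x a * R $$ (b,a) * cnj (y b))"
    unfolding herm_form_def using R by (auto intro!: sum.cong)
  also have "\<dots> = herm_form n R y x"
    unfolding herm_form_def by (subst sum.swap) (simp add: mult_ac)
  finally show ?thesis .
qed

lemma herm_form_diff_smult:
  "herm_form n R (\<lambda>a. x a - c * y a) (\<lambda>a. x a - c * y a)
   = herm_form n R x x - c * herm_form n R x y - cnj c * herm_form n R y x
     + cnj c * c * herm_form n R y y"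
  unfolding herm_form_def by (simp add: algebra_simps sum_subtractf sum.distrib sum_distrib_left)

lemma herm_form_smult_right: "herm_form n R x (\<lambda>a. c * y a) = c * herm_form n R x y"
  unfolding herm_form_def by (simp add: algebra_simps sum_distrib_left)

lemma linear_coeff_eq_0_if_quadratic_nonneg:
  fixes a b :: real
  assumes "\<And>t. 0 \<le> a * t + b * t\<^sup>2"
  shows "a = 0"
proof (rule ccontr)
  assume "a \<noteq> 0"
  define e where "e = 1 / (\<bar>b\<bar> + 1)"
  have e: "e > 0" "b * e < 1"
    unfolding e_def by (auto simp: divide_simps)
  have "a * (- a * e) + b * (- a * e)\<^sup>2 = a\<^sup>2 * e * (b * e - 1)"
    by (simp add: power2_eq_square algebra_simps)
  also have "\<dots> < 0"
    using e \<open>a \<noteq> 0\<close> by (intro mult_pos_neg) auto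
  finally show False
    using assms[of "- a * e"] by simp
qed

text \<open>The linear coefficient of the nonnegative quadratic t \<mapsto> \<langle>w - t y, R (w - t y)\<rangle> vanishes,
  so w is orthogonal to every vector with respect to the form; invertibility of R then gives w = 0.\<close>
lemma herm_form_eq_0_imp_zero:
  assumes R: "R \<in> carrier_mat n n" "cadj R = R"
    and psd: "\<And>x. 0 \<le> Re (herm_form n R x x)"
    and det: "det R \<noteq> 0"
    and w: "Re (herm_form n R w w) = 0"
  shows "\<forall>a<n. w a = 0"
proof -
  have Re_zero: "Re (herm_form n R w y) = 0" for y
  proof -
    have "0 \<le> (- 2 * Re (herm_form n R w y)) * t + Re (herm_form n R y y) * t\<^sup>2" for t :: real
    proof -
      have "herm_form n R y w = cnj (herm_form n R w y)"
        using herm_form_cnj[OF R, of w y] by simp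
      then have "Re (herm_form n R (\<lambda>a. w a - of_real t * y a) (\<lambda>a. w a - of_real t * y a))
        = (- 2 * Re (herm_form n R w y)) * t + Re (herm_form n R y y) * t\<^sup>2"
        using w by (simp add: herm_form_diff_smult power2_eq_square)
      with psd show ?thesis by metis
    qed
    then show ?thesis
      using linear_coeff_eq_0_if_quadratic_nonneg by fastforce
  qed
  have orth: "herm_form n R w y = 0" for y
    using Re_zero[of y] Re_zero[of "\<lambda>a. \<i> * y a"]
    by (simp add: herm_form_smult_right complex_eq_iff)
  define v where "v = vec n (\<lambda>a. cnj (w a))"
  have "transpose_mat R *\<^sub>v v = 0\<^sub>v n"
  proof (rule eq_vecI)
    fix b assume "b < dim_vec (0\<^sub>v n :: complex vec)"
    then have b: "b < n" by simp
    have "(transpose_mat R *\<^sub>v v) $ b = herm_form n R w (\<lambda>a. of_bool (a = b))"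
      using R b unfolding herm_form_def v_def
      by (simp add: scalar_prod_def lessThan_atLeast0 mult.commute if_distrib cong: if_cong)
    then show "(transpose_mat R *\<^sub>v v) $ b = 0\<^sub>v n $ b"
      using orth b by simp
  qed (use R in auto)
  moreover have "det (transpose_mat R) \<noteq> 0"
    using det det_transpose[OF R(1)] by simp
  moreover have "v \<in> carrier_vec n"
    unfolding v_def by simp
  ultimately have "v = 0\<^sub>v n"
    using det_0_iff_vec_prod_zero[of "transpose_mat R" n] R(1) by auto
  then show ?thesis
    unfolding v_def by (metis complex_cnj_zero_iff index_vec index_zero_vec(1))
qed

lemma density_herm_form_nonneg:
  assumes "density_mat n R"
  shows "0 \<le> Re (herm_form n R x x)"
proof -
  have "R \<in> carrier_mat n n"
    using assms unfolding density_mat_def by auto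
  then have "conjugate (vec n x) \<bullet> (R *\<^sub>v vec n x) = herm_form n R x x"
    unfolding herm_form_def
    by (simp add: scalar_prod_def lessThan_atLeast0 sum_distrib_left mult.assoc)
  then show ?thesis
    using assms unfolding density_mat_def by (metis vec_carrier)
qed

lemma ctrace_mult_mult_cadj:
  assumes "X \<in> carrier_mat m n" "R \<in> carrier_mat n n" "Z \<in> carrier_mat m n"
  shows "ctrace (X * R * cadj Z) = (\<Sum>i<m. herm_form n R (\<lambda>a. cnj (X $$ (i,a))) (\<lambda>a. cnj (Z $$ (i,a))))"
proof -
  have "(X * R * cadj Z) $$ (i,i) = (\<Sum>a<n. \<Sum>b<n. X $$ (i,a) * R $$ (a,b) * cnj (Z $$ (i,b)))"
    if "i < m" for i
    using index_mult_mult[OF assms(1,2) cadj_carrier[OF assms(3)] that that] assms that by simp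
  then show ?thesis
    using assms unfolding ctrace_def herm_form_def by simp
qed

lemma density_ctrace_nonneg:
  assumes "density_mat n R" "X \<in> carrier_mat m n"
  shows "0 \<le> Re (ctrace (X * R * cadj X))"
  using assms density_herm_form_nonneg[OF assms(1)]
  by (auto simp: ctrace_mult_mult_cadj sum_nonneg density_mat_def)

lemma density_ctrace_eq_0:
  assumes rho: "density_mat n R" "det R \<noteq> 0" and X: "X \<in> carrier_mat m n"
    and zero: "Re (ctrace (X * R * cadj X)) = 0"
  shows "X = 0\<^sub>m m n"
proof -
  have R: "R \<in> carrier_mat n n" "cadj R = R"
    using rho unfolding density_mat_def by auto
  have "\<forall>i<m. Re (herm_form n R (\<lambda>a. cnj (X $$ (i,a))) (\<lambda>a. cnj (X $$ (i,a)))) = 0"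
    using zero density_herm_form_nonneg[OF rho(1)]
    by (simp add: ctrace_mult_mult_cadj[OF X R(1) X] Re_sum sum_nonneg_eq_0_iff)
  then have "\<forall>i<m. \<forall>a<n. cnj (X $$ (i,a)) = 0"
    using herm_form_eq_0_imp_zero[OF R density_herm_form_nonneg[OF rho(1)] rho(2)] by blast
  then show ?thesis
    using X by (auto intro!: eq_matI)
qed

lemma density_sum_ctrace_eq_0:
  fixes d :: nat
  assumes rho: "density_mat n \<rho>" "det \<rho> \<noteq> 0"
    and R: "\<And>j. j < d \<Longrightarrow> R j \<in> carrier_mat m n"
    and zero: "(\<Sum>j<d. ctrace (R j * \<rho> * cadj (R j))) = 0" and j: "j < d"
  shows "R j = 0\<^sub>m m n"
proof -
  have sum0: "(\<Sum>i<d. Re (ctrace (R i * \<rho> * cadj (R i)))) = 0"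
    using zero by (simp flip: Re_sum)
  have nonneg: "0 \<le> Re (ctrace (R i * \<rho> * cadj (R i)))" if "i \<in> {..<d}" for i
    using density_ctrace_nonneg[OF rho(1) R] that by simp
  have "Re (ctrace (R j * \<rho> * cadj (R j))) = 0"
    using sum_nonneg_0[OF finite_lessThan nonneg sum0] j by simp
  then show ?thesis
    by (rule density_ctrace_eq_0[OF rho R[OF j]])
qed


lemma ctrace_diff_expand:
  assumes "X \<in> carrier_mat m n" "R \<in> carrier_mat n n" "Z \<in> carrier_mat m n"
  shows "ctrace ((X - c \<cdot>\<^sub>m Z) * R * cadj (X - c \<cdot>\<^sub>m Z))
    = ctrace (X * R * cadj X) - cnj c * ctrace (X * R * cadj Z) - c * ctrace (Z * R * cadj X)
      + c * cnj c * ctrace (Z * R * cadj Z)"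
proof -
  let ?x = "\<lambda>i a. cnj (X $$ (i,a))" and ?z = "\<lambda>i a. cnj (Z $$ (i,a))"
  have XZ: "X - c \<cdot>\<^sub>m Z \<in> carrier_mat m n"
    using assms(3) by (intro minus_carrier_mat smult_carrier_mat)
  have row: "herm_form n R (\<lambda>a. cnj ((X - c \<cdot>\<^sub>m Z) $$ (i,a))) (\<lambda>a. cnj ((X - c \<cdot>\<^sub>m Z) $$ (i,a)))
    = herm_form n R (?x i) (?x i) - cnj c * herm_form n R (?x i) (?z i)
      - c * herm_form n R (?z i) (?x i) + c * cnj c * herm_form n R (?z i) (?z i)" if "i < m" for i
  proof -
    have "herm_form n R (\<lambda>a. cnj ((X - c \<cdot>\<^sub>m Z) $$ (i,a))) (\<lambda>a. cnj ((X - c \<cdot>\<^sub>m Z) $$ (i,a)))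
      = herm_form n R (\<lambda>a. ?x i a - cnj c * ?z i a) (\<lambda>a. ?x i a - cnj c * ?z i a)"
      using assms that by (auto simp: herm_form_def intro!: sum.cong)
    then show ?thesis
      by (simp only: herm_form_diff_smult complex_cnj_cnj)
  qed
  have "ctrace ((X - c \<cdot>\<^sub>m Z) * R * cadj (X - c \<cdot>\<^sub>m Z))
    = (\<Sum>i<m. herm_form n R (?x i) (?x i) - cnj c * herm_form n R (?x i) (?z i)
        - c * herm_form n R (?z i) (?x i) + c * cnj c * herm_form n R (?z i) (?z i))"
    unfolding ctrace_mult_mult_cadj[OF XZ assms(2) XZ] by (rule sum.cong[OF refl], rule row) simp
  also have "\<dots> = (\<Sum>i<m. herm_form n R (?x i) (?x i)) - cnj c * (\<Sum>i<m. herm_form n R (?x i) (?z i))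
        - c * (\<Sum>i<m. herm_form n R (?z i) (?x i)) + c * cnj c * (\<Sum>i<m. herm_form n R (?z i) (?z i))"
    by (simp only: sum_subtractf sum.distrib sum_distrib_left)
  finally show ?thesis
    by (simp only: ctrace_mult_mult_cadj[OF assms(1,2,1)] ctrace_mult_mult_cadj[OF assms(1,2,3)]
        ctrace_mult_mult_cadj[OF assms(3,2,1)] ctrace_mult_mult_cadj[OF assms(3,2,3)])
qed

lemma ctrace_form_cnj:
  assumes "X \<in> carrier_mat m n" "R \<in> carrier_mat n n" "cadj R = R" "Z \<in> carrier_mat m n"
  shows "cnj (ctrace (X * R * cadj Z)) = ctrace (Z * R * cadj X)"
  by (simp only: ctrace_mult_mult_cadj[OF assms(1,2,4)] ctrace_mult_mult_cadj[OF assms(4,2,1)]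
      cnj_sum herm_form_cnj[OF assms(2,3)])

section \<open>Vectorization\<close>

lemma pair_index_less:
  assumes "a < m" "b < (n::nat)"
  shows "a * n + b < m * n"
proof -
  have "a * n + b < Suc a * n"
    using assms(2) by simp
  also have "\<dots> \<le> m * n"
    using assms(1) by (intro mult_le_mono1) simp
  finally show ?thesis .
qed

lemma pair_index_decompose:
  assumes "l < n * (n::nat)"
  shows "l div n < n" "l mod n < n" "l = l div n * n + l mod n"
proof -
  have "0 < n"
    using assms by (cases n) auto
  then show "l div n < n" "l mod n < n" "l = l div n * n + l mod n"
    using assms by (auto simp: less_mult_imp_div_less)
qed

lemma sum_lessThan_mult:
  fixes g :: "nat \<Rightarrow> 'a::comm_monoid_add"
  shows "(\<Sum>l<m*n. g l) = (\<Sum>a<m. \<Sum>b<n. g (a*n+b))"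
proof -
  have "sum g {a*n..<a*n+n} = (\<Sum>b<n. g (a*n+b))" for a
    by (simp add: sum.atLeastLessThan_shift_0[of g "a*n"] atLeast0LessThan add.commute)
  then show ?thesis
    by (simp add: sum.nat_group[symmetric])
qed

text \<open>Row-major vectorization, matching the index convention (i1,i2) \<leftrightarrow> i1 * n2 + i2 of kron.\<close>
definition vectorize :: "nat \<Rightarrow> 'a mat \<Rightarrow> 'a vec" where
  "vectorize n X = vec (n*n) (\<lambda>l. X $$ (l div n, l mod n))"

lemma dim_vec_vectorize [simp]: "dim_vec (vectorize n X) = n * n"
  unfolding vectorize_def by simp

lemma vectorize_carrier [simp]: "vectorize n X \<in> carrier_vec (n*n)"
  unfolding carrier_vec_def by simp

lemma index_vectorize [simp]: "a < n \<Longrightarrow> b < n \<Longrightarrow> vectorize n X $ (a*n+b) = X $$ (a,b)"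
  unfolding vectorize_def by (simp add: pair_index_less)

lemma vectorize_eqI:
  assumes "v \<in> carrier_vec (n*n)" "\<And>a b. a < n \<Longrightarrow> b < n \<Longrightarrow> v $ (a*n+b) = X $$ (a,b)"
  shows "v = vectorize n X"
proof (rule eq_vecI)
  fix l assume "l < dim_vec (vectorize n X)"
  then have "l < n * n"
    by simp
  from pair_index_decompose[OF this] show "v $ l = vectorize n X $ l"
    using assms(2) by (metis index_vectorize)
qed (use assms(1) in auto)

lemma vectorize_inj:
  assumes "X \<in> carrier_mat n n" "Z \<in> carrier_mat n n" "vectorize n X = vectorize n Z"
  shows "X = Z"
proof (rule eq_matI)
  fix a b assume "a < dim_row Z" "b < dim_col Z"
  then show "X $$ (a,b) = Z $$ (a,b)"
    using assms by (metis carrier_matD index_vectorize)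
qed (use assms in auto)

lemma vectorize_surj:
  assumes "v \<in> carrier_vec (n*n)"
  obtains X where "X \<in> carrier_mat n n" "v = vectorize n X"
proof
  show "mat n n (\<lambda>(a,b). v $ (a*n+b)) \<in> carrier_mat n n"
    by simp
  show "v = vectorize n (mat n n (\<lambda>(a,b). v $ (a*n+b)))"
    by (rule vectorize_eqI) (use assms in auto)
qed

lemma vectorize_smult: "X \<in> carrier_mat n n \<Longrightarrow> vectorize n (c \<cdot>\<^sub>m X) = c \<cdot>\<^sub>v vectorize n X"
  by (rule sym, rule vectorize_eqI) (auto simp: pair_index_less)

lemma vectorize_zero: "vectorize n (0\<^sub>m n n) = 0\<^sub>v (n*n)"
  by (rule sym, rule vectorize_eqI) (auto simp: pair_index_less)

section \<open>The twisted transfer matrix as a map on matrices\<close>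

definition phys_action :: "nat \<Rightarrow> nat \<Rightarrow> complex mat \<Rightarrow> (nat \<Rightarrow> complex mat) \<Rightarrow> nat \<Rightarrow> complex mat" where
  "phys_action d D u A j = msum D D d (\<lambda>k. u $$ (j,k) \<cdot>\<^sub>m A k)"

lemma phys_action_carrier [simp]: "phys_action d D u A j \<in> carrier_mat D D"
  unfolding phys_action_def by simp

lemma index_phys_action:
  assumes "\<And>k. k < d \<Longrightarrow> A k \<in> carrier_mat D D" "a < D" "b < D"
  shows "phys_action d D u A j $$ (a,b) = (\<Sum>k<d. u $$ (j,k) * A k $$ (a,b))"
  unfolding phys_action_def using assms(2,3) by (auto intro!: sum.cong dest!: assms(1))

lemma index_transfer_u:
  assumes "\<And>k. k < d \<Longrightarrow> A k \<in> carrier_mat D D" "p < D" "q < D" "a < D" "b < D"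
  shows "transfer_u d D u A $$ (p*D+q, a*D+b)
    = (\<Sum>j<d. \<Sum>k<d. u $$ (j,k) * A k $$ (p,a) * cnj (A j $$ (q,b)))"
proof -
  have "(u $$ (j,k) \<cdot>\<^sub>m kron (A k) (cconj (A j))) $$ (p*D+q, a*D+b)
     = u $$ (j,k) * A k $$ (p,a) * cnj (A j $$ (q,b))" if "j < d" "k < d" for j k
    using assms(1)[OF that(1)] assms(1)[OF that(2)] assms(2-5)
    by (simp add: kron_def cconj_def pair_index_less)
  then show ?thesis
    unfolding transfer_u_def using assms(2-5) by (simp add: pair_index_less)
qed

lemma transfer_u_carrier: "transfer_u d D u A \<in> carrier_mat (D*D) (D*D)"
  unfolding transfer_u_def by (rule msum_carrier)

lemma transfer_u_mult_vectorize:
  assumes A: "\<And>k. k < d \<Longrightarrow> A k \<in> carrier_mat D D" and X: "X \<in> carrier_mat D D"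
  shows "transfer_u d D u A *\<^sub>v vectorize D X
    = vectorize D (msum D D d (\<lambda>j. phys_action d D u A j * X * cadj (A j)))"
proof (rule vectorize_eqI)
  fix p q assume p: "p < D" and q: "q < D"
  have "(transfer_u d D u A *\<^sub>v vectorize D X) $ (p*D+q)
      = (\<Sum>l<D*D. transfer_u d D u A $$ (p*D+q, l) * vectorize D X $ l)"
    using p q transfer_u_carrier[of d D u A]
    by (simp add: pair_index_less scalar_prod_def lessThan_atLeast0)
  also have "\<dots> = (\<Sum>a<D. \<Sum>b<D. \<Sum>j<d. \<Sum>k<d.
      u $$ (j,k) * A k $$ (p,a) * cnj (A j $$ (q,b)) * X $$ (a,b))"
    using p q
    by (subst sum_lessThan_mult) (auto simp: index_transfer_u[OF A] sum_distrib_right intro!: sum.cong)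
  also have "\<dots> = (\<Sum>j<d. \<Sum>a<D. \<Sum>b<D. \<Sum>k<d.
      u $$ (j,k) * A k $$ (p,a) * cnj (A j $$ (q,b)) * X $$ (a,b))"
    by (rule sum_swap3)
  also have "\<dots> = (\<Sum>j<d. \<Sum>a<D. \<Sum>b<D.
      (\<Sum>k<d. u $$ (j,k) * A k $$ (p,a)) * X $$ (a,b) * cnj (A j $$ (q,b)))"
    by (simp add: sum_distrib_left sum_distrib_right mult_ac)
  also have "\<dots> = msum D D d (\<lambda>j. phys_action d D u A j * X * cadj (A j)) $$ (p,q)"
  proof -
    have "(phys_action d D u A j * X * cadj (A j)) $$ (p,q)
      = (\<Sum>a<D. \<Sum>b<D. (\<Sum>k<d. u $$ (j,k) * A k $$ (p,a)) * X $$ (a,b) * cnj (A j $$ (q,b)))"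
      if "j < d" for j
      using index_mult_mult[OF phys_action_carrier[of d D u A j] X cadj_carrier[OF A[OF that]] p q]
        carrier_matD[OF A[OF that]] p q
      by (auto simp: index_phys_action[OF A] intro!: sum.cong)
    then show ?thesis
      using p q by simp
  qed
  finally show "(transfer_u d D u A *\<^sub>v vectorize D X) $ (p*D+q)
      = msum D D d (\<lambda>j. phys_action d D u A j * X * cadj (A j)) $$ (p,q)" .
qed (rule mult_mat_vec_carrier[OF transfer_u_carrier vectorize_carrier])

lemma transpose_transfer_u_mult_vectorize:
  assumes A: "\<And>k. k < d \<Longrightarrow> A k \<in> carrier_mat D D" and Y: "Y \<in> carrier_mat D D"
  shows "transpose_mat (transfer_u d D u A) *\<^sub>v vectorize D (transpose_mat Y)
    = vectorize D (transpose_mat (msum D D d (\<lambda>j. cadj (A j) * Y * phys_action d D u A j)))"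
proof (rule vectorize_eqI)
  fix q p assume q: "q < D" and p: "p < D"
  have "(transpose_mat (transfer_u d D u A) *\<^sub>v vectorize D (transpose_mat Y)) $ (q*D+p)
      = (\<Sum>l<D*D. transfer_u d D u A $$ (l, q*D+p) * vectorize D (transpose_mat Y) $ l)"
    using p q transfer_u_carrier[of d D u A]
    by (simp add: pair_index_less scalar_prod_def lessThan_atLeast0)
  also have "\<dots> = (\<Sum>b<D. \<Sum>a<D. \<Sum>j<d. \<Sum>k<d.
      u $$ (j,k) * A k $$ (b,q) * cnj (A j $$ (a,p)) * Y $$ (a,b))"
    using p q Y
    by (subst sum_lessThan_mult) (auto simp: index_transfer_u[OF A] sum_distrib_right intro!: sum.cong)
  also have "\<dots> = (\<Sum>j<d. \<Sum>b<D. \<Sum>a<D. \<Sum>k<d.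
      u $$ (j,k) * A k $$ (b,q) * cnj (A j $$ (a,p)) * Y $$ (a,b))"
    by (rule sum_swap3)
  also have "\<dots> = (\<Sum>j<d. \<Sum>b<D. \<Sum>a<D.
      cnj (A j $$ (a,p)) * Y $$ (a,b) * (\<Sum>k<d. u $$ (j,k) * A k $$ (b,q)))"
    by (simp add: sum_distrib_left sum_distrib_right mult_ac)
  also have "\<dots> = msum D D d (\<lambda>j. cadj (A j) * Y * phys_action d D u A j) $$ (p,q)"
  proof -
    have "(cadj (A j) * Y * phys_action d D u A j) $$ (p,q)
      = (\<Sum>b<D. \<Sum>a<D. cnj (A j $$ (a,p)) * Y $$ (a,b) * (\<Sum>k<d. u $$ (j,k) * A k $$ (b,q)))"
      if "j < d" for j
    proof -
      have "(cadj (A j) * Y * phys_action d D u A j) $$ (p,q)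
        = (\<Sum>a<D. \<Sum>b<D. cnj (A j $$ (a,p)) * Y $$ (a,b) * (\<Sum>k<d. u $$ (j,k) * A k $$ (b,q)))"
        using index_mult_mult[OF cadj_carrier[OF A[OF that]] Y phys_action_carrier[of d D u A j] p q]
          carrier_matD[OF A[OF that]] p q
        by (auto simp: index_phys_action[OF A] intro!: sum.cong)
      also have "\<dots> = (\<Sum>b<D. \<Sum>a<D. cnj (A j $$ (a,p)) * Y $$ (a,b) * (\<Sum>k<d. u $$ (j,k) * A k $$ (b,q)))"
        by (rule sum.swap)
      finally show ?thesis .
    qed
    then show ?thesis
      using p q by simp
  qed
  finally show "(transpose_mat (transfer_u d D u A) *\<^sub>v vectorize D (transpose_mat Y)) $ (q*D+p)
      = transpose_mat (msum D D d (\<lambda>j. cadj (A j) * Y * phys_action d D u A j)) $$ (q,p)"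
    using p q by simp
qed (rule mult_mat_vec_carrier[OF _ vectorize_carrier], simp add: transfer_u_carrier)

lemma transfer_u_eigenvalueI:
  assumes A: "\<And>k. k < d \<Longrightarrow> A k \<in> carrier_mat D D"
    and X: "X \<in> carrier_mat D D" "X \<noteq> 0\<^sub>m D D"
    and eig: "msum D D d (\<lambda>j. phys_action d D u A j * X * cadj (A j)) = z \<cdot>\<^sub>m X"
  shows "eigenvalue (transfer_u d D u A) z"
  unfolding eigenvalue_def eigenvector_def
proof (intro exI conjI)
  show "vectorize D X \<in> carrier_vec (dim_row (transfer_u d D u A))"
    using transfer_u_carrier[of d D u A] by simp
  show "vectorize D X \<noteq> 0\<^sub>v (dim_row (transfer_u d D u A))"
    using X vectorize_inj[OF X(1) zero_carrier_mat] transfer_u_carrier[of d D u A]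
    by (auto simp: vectorize_zero)
  show "transfer_u d D u A *\<^sub>v vectorize D X = z \<cdot>\<^sub>v vectorize D X"
    using X(1) by (simp add: transfer_u_mult_vectorize[OF A X(1)] eig vectorize_smult)
qed

lemma transfer_u_eigenvalueE:
  assumes A: "\<And>k. k < d \<Longrightarrow> A k \<in> carrier_mat D D"
    and ev: "eigenvalue (transfer_u d D u A) z"
  obtains Y where "Y \<in> carrier_mat D D" "Y \<noteq> 0\<^sub>m D D"
    "msum D D d (\<lambda>j. cadj (A j) * Y * phys_action d D u A j) = z \<cdot>\<^sub>m Y"
proof -
  let ?E = "transfer_u d D u A"
  have "eigenvalue (transpose_mat ?E) z"
    using ev transfer_u_carrier[of d D u A]
    by (simp add: eigenvalue_root_char_poly[of _ "D*D"])
  then obtain y where y: "y \<in> carrier_vec (D*D)" "y \<noteq> 0\<^sub>v (D*D)" "transpose_mat ?E *\<^sub>v y = z \<cdot>\<^sub>v y"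
    using transfer_u_carrier[of d D u A] unfolding eigenvalue_def eigenvector_def by auto
  obtain X where X: "X \<in> carrier_mat D D" "y = vectorize D X"
    using vectorize_surj[OF y(1)] .
  define Y where "Y = transpose_mat X"
  have Y: "Y \<in> carrier_mat D D"
    using X(1) unfolding Y_def by simp
  have "vectorize D (transpose_mat (msum D D d (\<lambda>j. cadj (A j) * Y * phys_action d D u A j)))
      = transpose_mat ?E *\<^sub>v vectorize D (transpose_mat Y)"
    by (rule transpose_transfer_u_mult_vectorize[OF A Y, symmetric])
  also have "\<dots> = vectorize D (z \<cdot>\<^sub>m X)"
    using y(3) X by (simp add: Y_def vectorize_smult)
  finally have "vectorize D (transpose_mat (msum D D d (\<lambda>j. cadj (A j) * Y * phys_action d D u A j)))
      = vectorize D (z \<cdot>\<^sub>m X)" .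
  then have "transpose_mat (msum D D d (\<lambda>j. cadj (A j) * Y * phys_action d D u A j)) = z \<cdot>\<^sub>m X"
    using X(1) by (intro vectorize_inj) auto
  then have "msum D D d (\<lambda>j. cadj (A j) * Y * phys_action d D u A j) = transpose_mat (z \<cdot>\<^sub>m X)"
    by (metis transpose_transpose)
  also have "\<dots> = z \<cdot>\<^sub>m Y"
    unfolding Y_def by (intro eq_matI) auto
  finally have "msum D D d (\<lambda>j. cadj (A j) * Y * phys_action d D u A j) = z \<cdot>\<^sub>m Y" .
  moreover have "Y \<noteq> 0\<^sub>m D D"
  proof
    assume "Y = 0\<^sub>m D D"
    then have "X = 0\<^sub>m D D"
      unfolding Y_def by (metis index_transpose_mat(2,3) transpose_transpose zero_transpose_mat)
    then show False
      using y(2) X(2) by (simp add: vectorize_zero)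
  qed
  ultimately show ?thesis
    using Y that by blast
qed

section \<open>Unitary mixing of the tensor\<close>

lemma unitary_cmat_cols_orthonormal:
  assumes "unitary_cmat d u" "k < d" "l < d"
  shows "(\<Sum>j<d. cnj (u $$ (j,k)) * u $$ (j,l)) = of_bool (k = l)"
proof -
  have u: "u \<in> carrier_mat d d" "cadj u * u = 1\<^sub>m d"
    using assms(1) unfolding unitary_cmat_def by auto
  have "(\<Sum>j<d. cnj (u $$ (j,k)) * u $$ (j,l)) = (cadj u * u) $$ (k,l)"
    using u(1) assms(2,3) by (auto simp: scalar_prod_def lessThan_atLeast0 intro!: sum.cong)
  also have "\<dots> = of_bool (k = l)"
    using u assms by simp
  finally show ?thesis .
qed

lemma unitary_cmat_sum_cnj_mult:
  assumes "unitary_cmat d u"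
  shows "(\<Sum>j<d. cnj (\<Sum>k<d. u $$ (j,k) * x k) * (\<Sum>l<d. u $$ (j,l) * y l)) = (\<Sum>k<d. cnj (x k) * y k)"
proof -
  have "(\<Sum>j<d. cnj (\<Sum>k<d. u $$ (j,k) * x k) * (\<Sum>l<d. u $$ (j,l) * y l))
      = (\<Sum>j<d. \<Sum>k<d. \<Sum>l<d. cnj (x k) * y l * (cnj (u $$ (j,k)) * u $$ (j,l)))"
    by (simp add: sum_distrib_left sum_distrib_right mult_ac)
  also have "\<dots> = (\<Sum>k<d. \<Sum>l<d. \<Sum>j<d. cnj (x k) * y l * (cnj (u $$ (j,k)) * u $$ (j,l)))"
    by (rule sum_swap3[symmetric])
  also have "\<dots> = (\<Sum>k<d. \<Sum>l<d. cnj (x k) * y l * (\<Sum>j<d. cnj (u $$ (j,k)) * u $$ (j,l)))"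
    by (simp add: sum_distrib_left)
  also have "\<dots> = (\<Sum>k<d. \<Sum>l<d. cnj (x k) * y l * of_bool (k = l))"
    using unitary_cmat_cols_orthonormal[OF assms] by (auto intro!: sum.cong)
  also have "\<dots> = (\<Sum>k<d. cnj (x k) * y k)"
    by (simp add: if_distrib cong: if_cong)
  finally show ?thesis .
qed

lemma sum_cnj_phys_action_mult:
  assumes A: "\<And>k. k < d \<Longrightarrow> A k \<in> carrier_mat D D" and u: "unitary_cmat d u"
    and "a < D" "p < D" "b < D" "q < D"
  shows "(\<Sum>j<d. cnj (phys_action d D u A j $$ (a,p)) * phys_action d D u A j $$ (b,q))
    = (\<Sum>k<d. cnj (A k $$ (a,p)) * A k $$ (b,q))"
  using assms(3-6) by (simp only: index_phys_action[OF A] unitary_cmat_sum_cnj_mult[OF u])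

lemma msum_cadj_phys_action_sandwich:
  assumes A: "\<And>k. k < d \<Longrightarrow> A k \<in> carrier_mat D D" and u: "unitary_cmat d u"
    and M: "M \<in> carrier_mat D D"
  shows "msum D D d (\<lambda>j. cadj (phys_action d D u A j) * M * phys_action d D u A j)
    = msum D D d (\<lambda>j. cadj (A j) * M * A j)"
proof (rule eq_matI)
  fix p q assume "p < dim_row (msum D D d (\<lambda>j. cadj (A j) * M * A j))"
    "q < dim_col (msum D D d (\<lambda>j. cadj (A j) * M * A j))"
  then have p: "p < D" and q: "q < D"
    by auto
  have entry: "(cadj P * M * P) $$ (p,q) = (\<Sum>a<D. \<Sum>b<D. M $$ (a,b) * (cnj (P $$ (a,p)) * P $$ (b,q)))"
    if "P \<in> carrier_mat D D" for P
    using index_mult_mult[OF cadj_carrier[OF that] M that p q] that p q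
    by (auto simp: mult_ac intro!: sum.cong)
  have "msum D D d (\<lambda>j. cadj (phys_action d D u A j) * M * phys_action d D u A j) $$ (p,q)
      = (\<Sum>a<D. \<Sum>b<D. M $$ (a,b) * (\<Sum>j<d. cnj (phys_action d D u A j $$ (a,p)) * phys_action d D u A j $$ (b,q)))"
    using p q by (simp add: entry sum_distrib_left sum_swap3[of _ "{..<d}", symmetric])
  also have "\<dots> = (\<Sum>a<D. \<Sum>b<D. M $$ (a,b) * (\<Sum>k<d. cnj (A k $$ (a,p)) * A k $$ (b,q)))"
    using p q by (auto simp: sum_cnj_phys_action_mult[OF A u] intro!: sum.cong)
  also have "\<dots> = msum D D d (\<lambda>j. cadj (A j) * M * A j) $$ (p,q)"
    using p q A by (simp add: entry sum_distrib_left sum_swap3[of _ "{..<d}", symmetric])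
  finally show "msum D D d (\<lambda>j. cadj (phys_action d D u A j) * M * phys_action d D u A j) $$ (p,q)
      = msum D D d (\<lambda>j. cadj (A j) * M * A j) $$ (p,q)" .
qed auto

lemma msum_phys_action_sandwich_cadj:
  assumes A: "\<And>k. k < d \<Longrightarrow> A k \<in> carrier_mat D D" and u: "unitary_cmat d u"
    and X: "X \<in> carrier_mat D D"
  shows "msum D D d (\<lambda>j. phys_action d D u A j * X * cadj (phys_action d D u A j))
    = msum D D d (\<lambda>j. A j * X * cadj (A j))"
proof (rule eq_matI)
  fix p q assume "p < dim_row (msum D D d (\<lambda>j. A j * X * cadj (A j)))"
    "q < dim_col (msum D D d (\<lambda>j. A j * X * cadj (A j)))"
  then have p: "p < D" and q: "q < D"
    by auto
  have entry: "(P * X * cadj P) $$ (p,q) = (\<Sum>a<D. \<Sum>b<D. X $$ (a,b) * (cnj (P $$ (q,b)) * P $$ (p,a)))"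
    if "P \<in> carrier_mat D D" for P
    using index_mult_mult[OF that X cadj_carrier[OF that] p q] that p q
    by (auto simp: mult_ac intro!: sum.cong)
  have "msum D D d (\<lambda>j. phys_action d D u A j * X * cadj (phys_action d D u A j)) $$ (p,q)
      = (\<Sum>a<D. \<Sum>b<D. X $$ (a,b) * (\<Sum>j<d. cnj (phys_action d D u A j $$ (q,b)) * phys_action d D u A j $$ (p,a)))"
    using p q by (simp add: entry sum_distrib_left sum_swap3[of _ "{..<d}", symmetric])
  also have "\<dots> = (\<Sum>a<D. \<Sum>b<D. X $$ (a,b) * (\<Sum>k<d. cnj (A k $$ (q,b)) * A k $$ (p,a)))"
    using p q by (auto simp: sum_cnj_phys_action_mult[OF A u] intro!: sum.cong)
  also have "\<dots> = msum D D d (\<lambda>j. A j * X * cadj (A j)) $$ (p,q)"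
    using p q A by (simp add: entry sum_distrib_left sum_swap3[of _ "{..<d}", symmetric])
  finally show "msum D D d (\<lambda>j. phys_action d D u A j * X * cadj (phys_action d D u A j)) $$ (p,q)
      = msum D D d (\<lambda>j. A j * X * cadj (A j)) $$ (p,q)" .
qed auto

section \<open>Peripheral eigenvalues\<close>

lemma sum_ctrace_phys_action_form:
  assumes A: "\<And>k. k < d \<Longrightarrow> A k \<in> carrier_mat D D" and u: "unitary_cmat d u"
    and \<rho>: "\<rho> \<in> carrier_mat D D" and fixed: "msum D D d (\<lambda>j. A j * \<rho> * cadj (A j)) = \<rho>"
    and Y: "Y \<in> carrier_mat D D"
  shows "(\<Sum>j<d. ctrace (Y * phys_action d D u A j * \<rho> * cadj (Y * phys_action d D u A j)))
    = ctrace (Y * \<rho> * cadj Y)"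
proof -
  let ?B = "phys_action d D u A"
  have "(\<Sum>j<d. ctrace (Y * ?B j * \<rho> * cadj (Y * ?B j)))
      = (\<Sum>j<d. ctrace (?B j * \<rho> * cadj (?B j) * (cadj Y * Y)))"
    using Y \<rho> by (simp add: ctrace_rotate_right_mult)
  also have "\<dots> = ctrace (msum D D d (\<lambda>j. ?B j * \<rho> * cadj (?B j)) * (cadj Y * Y))"
    using Y \<rho> by (intro sum_ctrace_mult) (auto simp: mult_carrier_mat_square)
  also have "\<dots> = ctrace (\<rho> * (cadj Y * Y))"
    by (simp add: msum_phys_action_sandwich_cadj[OF A u \<rho>] fixed)
  also have "\<dots> = ctrace (Y * \<rho> * cadj Y)"
    using Y \<rho> ctrace_mult_comm[of Y D D "\<rho> * cadj Y"]
    by (simp add: assoc_mult_mat[of _ D D _ D _ D] mult_carrier_mat_square)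
  finally show ?thesis .
qed

lemma sum_ctrace_left_canonical_form:
  assumes A: "\<And>k. k < d \<Longrightarrow> A k \<in> carrier_mat D D"
    and lc: "msum D D d (\<lambda>j. cadj (A j) * A j) = 1\<^sub>m D"
    and \<rho>: "\<rho> \<in> carrier_mat D D" and Y: "Y \<in> carrier_mat D D"
  shows "(\<Sum>j<d. ctrace (A j * Y * \<rho> * cadj (A j * Y))) = ctrace (Y * \<rho> * cadj Y)"
proof -
  have "(\<Sum>j<d. ctrace (A j * Y * \<rho> * cadj (A j * Y)))
      = (\<Sum>j<d. ctrace (cadj (A j) * A j * (Y * \<rho> * cadj Y)))"
    using Y \<rho> A by (simp add: ctrace_rotate_left_mult)
  also have "\<dots> = ctrace (msum D D d (\<lambda>j. cadj (A j) * A j) * (Y * \<rho> * cadj Y))"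
    using Y \<rho> A by (intro sum_ctrace_mult) (auto simp: mult_carrier_mat_square)
  also have "\<dots> = ctrace (Y * \<rho> * cadj Y)"
    unfolding lc using Y \<rho> by (simp add: mult_carrier_mat_square)
  finally show ?thesis .
qed

lemma sum_ctrace_left_eigenmatrix_form:
  assumes A: "\<And>k. k < d \<Longrightarrow> A k \<in> carrier_mat D D"
    and B: "\<And>k. k < d \<Longrightarrow> B k \<in> carrier_mat D D"
    and \<rho>: "\<rho> \<in> carrier_mat D D" and Y: "Y \<in> carrier_mat D D"
    and eig: "msum D D d (\<lambda>j. cadj (A j) * Y * B j) = z \<cdot>\<^sub>m Y"
  shows "(\<Sum>j<d. ctrace (Y * B j * \<rho> * cadj (A j * Y))) = z * ctrace (Y * \<rho> * cadj Y)"
proof -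
  have "(\<Sum>j<d. ctrace (Y * B j * \<rho> * cadj (A j * Y)))
      = (\<Sum>j<d. ctrace (cadj (A j) * Y * B j * (\<rho> * cadj Y)))"
    using Y \<rho> A B by (simp add: ctrace_rotate_mixed)
  also have "\<dots> = ctrace ((z \<cdot>\<^sub>m Y) * (\<rho> * cadj Y))"
    unfolding eig[symmetric] using Y \<rho> A B by (intro sum_ctrace_mult) (auto simp: mult_carrier_mat_square)
  also have "\<dots> = z * ctrace (Y * \<rho> * cadj Y)"
    using Y \<rho>
    by (simp add: mult_smult_assoc_mat[of Y D D _ D] ctrace_smult[of _ D] mult_carrier_mat_square
        assoc_mult_mat[of _ D D _ D _ D])
  finally show ?thesis .
qed

lemma left_eigenmatrix_intertwines:
  assumes A: "\<And>k. k < d \<Longrightarrow> A k \<in> carrier_mat D D"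
    and lc: "msum D D d (\<lambda>j. cadj (A j) * A j) = 1\<^sub>m D"
    and rho: "density_mat D \<rho>" "det \<rho> \<noteq> 0"
    and fixed: "msum D D d (\<lambda>j. A j * \<rho> * cadj (A j)) = \<rho>"
    and u: "unitary_cmat d u" and z: "cmod z = 1"
    and Y: "Y \<in> carrier_mat D D"
    and eig: "msum D D d (\<lambda>j. cadj (A j) * Y * phys_action d D u A j) = z \<cdot>\<^sub>m Y"
    and j: "j < d"
  shows "Y * phys_action d D u A j = z \<cdot>\<^sub>m (A j * Y)"
proof -
  let ?B = "phys_action d D u A"
  have \<rho>: "\<rho> \<in> carrier_mat D D" "cadj \<rho> = \<rho>"
    using rho unfolding density_mat_def by auto
  have zz: "z * cnj z = 1"
    using z by (metis complex_norm_square of_real_1 power_one)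
  define t where "t = ctrace (Y * \<rho> * cadj Y)"
  define R where "R j = Y * ?B j - z \<cdot>\<^sub>m (A j * Y)" for j
  have S1: "(\<Sum>j<d. ctrace (Y * ?B j * \<rho> * cadj (Y * ?B j))) = t"
    unfolding t_def by (rule sum_ctrace_phys_action_form[OF A u \<rho>(1) fixed Y])
  have S2: "(\<Sum>j<d. ctrace (Y * ?B j * \<rho> * cadj (A j * Y))) = z * t"
    unfolding t_def by (rule sum_ctrace_left_eigenmatrix_form[OF A phys_action_carrier \<rho>(1) Y eig])
  have "(\<Sum>j<d. ctrace (A j * Y * \<rho> * cadj (Y * ?B j)))
      = (\<Sum>j<d. cnj (ctrace (Y * ?B j * \<rho> * cadj (A j * Y))))"
    using Y \<rho> A
    by (intro sum.cong refl ctrace_form_cnj[of _ D D, symmetric]) (auto simp: mult_carrier_mat_square)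
  also have "\<dots> = cnj z * t"
    using S2 ctrace_form_cnj[OF Y \<rho> Y] unfolding t_def by (simp flip: cnj_sum)
  finally have S3: "(\<Sum>j<d. ctrace (A j * Y * \<rho> * cadj (Y * ?B j))) = cnj z * t" .
  have S4: "(\<Sum>j<d. ctrace (A j * Y * \<rho> * cadj (A j * Y))) = t"
    unfolding t_def by (rule sum_ctrace_left_canonical_form[OF A lc \<rho>(1) Y])
  have R: "\<And>j. j < d \<Longrightarrow> R j \<in> carrier_mat D D"
    unfolding R_def using Y A by (intro minus_carrier_mat) (simp add: mult_carrier_mat_square)
  have "(\<Sum>j<d. ctrace (R j * \<rho> * cadj (R j)))
      = (\<Sum>j<d. ctrace (Y * ?B j * \<rho> * cadj (Y * ?B j)) - cnj z * ctrace (Y * ?B j * \<rho> * cadj (A j * Y))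
          - z * ctrace (A j * Y * \<rho> * cadj (Y * ?B j)) + z * cnj z * ctrace (A j * Y * \<rho> * cadj (A j * Y)))"
    unfolding R_def using Y \<rho> A
    by (intro sum.cong refl ctrace_diff_expand[of _ D D]) (auto simp: mult_carrier_mat_square)
  also have "\<dots> = t - cnj z * (z * t) - z * (cnj z * t) + z * cnj z * t"
    by (simp only: sum_subtractf sum.distrib sum_distrib_left[symmetric] S1 S2 S3 S4)
  also have "\<dots> = 0"
    using zz by (simp add: algebra_simps)
  finally have "(\<Sum>j<d. ctrace (R j * \<rho> * cadj (R j))) = 0" .
  from density_sum_ctrace_eq_0[OF rho R this j]
  have R0: "Y * ?B j - z \<cdot>\<^sub>m (A j * Y) = 0\<^sub>m D D"
    unfolding R_def .
  show ?thesis
    by (rule diff_eq_0_mat_imp_eq[OF _ _ R0]) (use Y A[OF j] in auto)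
qed

lemma unitary_conj_of_intertwines:
  assumes W: "unitary_cmat n W" and A: "A \<in> carrier_mat n n" and B: "B \<in> carrier_mat n n"
    and WB: "W * B = z \<cdot>\<^sub>m (A * W)"
  shows "B = z \<cdot>\<^sub>m (cadj W * A * W)"
proof -
  have Wc: "W \<in> carrier_mat n n" "cadj W * W = 1\<^sub>m n"
    using W unfolding unitary_cmat_def by auto
  have "B = cadj W * W * B"
    using Wc B by simp
  also have "\<dots> = cadj W * (W * B)"
    by (rule assoc_mult_mat[OF cadj_carrier[OF Wc(1)] Wc(1) B])
  also have "\<dots> = z \<cdot>\<^sub>m (cadj W * A * W)"
    unfolding WB using Wc A by (simp add: mult_smult_distrib[of _ n n _ n] assoc_mult_mat[of _ n n _ n _ n])
  finally show ?thesis .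
qed

lemma intertwiner_adj_mult_fixed:
  assumes A: "\<And>k. k < d \<Longrightarrow> A k \<in> carrier_mat D D"
    and lc: "msum D D d (\<lambda>j. cadj (A j) * A j) = 1\<^sub>m D"
    and u: "unitary_cmat d u" and z: "cmod z = 1"
    and Y: "Y \<in> carrier_mat D D"
    and intertw: "\<And>j. j < d \<Longrightarrow> Y * phys_action d D u A j = z \<cdot>\<^sub>m (A j * Y)"
  shows "msum D D d (\<lambda>j. cadj (A j) * (cadj Y * Y) * A j) = cadj Y * Y"
proof -
  let ?B = "phys_action d D u A"
  have zz: "cnj z * z = 1"
    using z by (metis complex_norm_square mult.commute of_real_1 power_one)
  have summand: "cadj (?B j) * (cadj Y * Y) * ?B j = cadj Y * (cadj (A j) * A j) * Y" if "j < d" for j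
  proof -
    have Aj: "A j \<in> carrier_mat D D"
      using A that .
    have "cadj (?B j) * (cadj Y * Y) * ?B j = cadj (Y * ?B j) * (Y * ?B j)"
      using Y by (simp add: cadj_mult[of Y D D _ D] assoc_mult_mat[of _ D D _ D _ D]
          mult_carrier_mat_square)
    also have "\<dots> = (cnj z * z) \<cdot>\<^sub>m (cadj (A j * Y) * (A j * Y))"
      using Y Aj by (simp add: intertw[OF that] cadj_smult mult_smult_assoc_mat[of _ D D _ D]
          mult_smult_distrib[of _ D D _ D] mult_carrier_mat_square smult_smult_mat mult.commute)
    also have "\<dots> = cadj Y * (cadj (A j) * A j) * Y"
      using Y Aj zz by (simp add: cadj_mult[of "A j" D D Y D] assoc_mult_mat[of _ D D _ D _ D]
          mult_carrier_mat_square)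
    finally show ?thesis .
  qed
  have "msum D D d (\<lambda>j. cadj (A j) * (cadj Y * Y) * A j)
      = msum D D d (\<lambda>j. cadj (?B j) * (cadj Y * Y) * ?B j)"
    by (intro msum_cadj_phys_action_sandwich[OF A u, symmetric] mult_carrier_mat[OF cadj_carrier[OF Y] Y])
  also have "\<dots> = msum D D d (\<lambda>j. cadj Y * (cadj (A j) * A j) * Y)"
    by (rule msum_cong) (rule summand)
  also have "\<dots> = cadj Y * msum D D d (\<lambda>j. cadj (A j) * A j) * Y"
    using Y A by (simp add: mult_msum_distrib_left[of _ D D] msum_mult_distrib_right[of _ D D]
        mult_carrier_mat_square)
  also have "\<dots> = cadj Y * Y"
    using Y by (simp add: lc)
  finally show ?thesis .
qed

lemma adj_mult_eq_scalar_pos: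
  assumes Y: "Y \<in> carrier_mat n n" "Y \<noteq> 0\<^sub>m n n" and c: "cadj Y * Y = c \<cdot>\<^sub>m 1\<^sub>m n"
  obtains r where "r > 0" "c = of_real r"
proof -
  obtain a i where ai: "a < n" "i < n" "Y $$ (a,i) \<noteq> 0"
    using Y by (metis eq_matI carrier_matD index_zero_mat(1-3))
  define r where "r = (\<Sum>b<n. (cmod (Y $$ (b,i)))\<^sup>2)"
  have "0 < (cmod (Y $$ (a,i)))\<^sup>2"
    using ai by simp
  also have "\<dots> \<le> r"
    unfolding r_def using ai by (intro member_le_sum) auto
  finally have pos: "r > 0" .
  have "c = (cadj Y * Y) $$ (i,i)"
    using c ai by simp
  also have "\<dots> = (\<Sum>b<n. cnj (Y $$ (b,i)) * Y $$ (b,i))"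
    using Y ai by (simp add: scalar_prod_def lessThan_atLeast0)
  also have "\<dots> = of_real r"
    unfolding r_def of_real_sum by (intro sum.cong refl) (metis complex_norm_square mult.commute)
  finally show ?thesis
    using pos that by blast
qed

lemma unitary_cmat_smult_if_adj_mult_scalar:
  assumes Y: "Y \<in> carrier_mat n n" "Y \<noteq> 0\<^sub>m n n" and c: "cadj Y * Y = c \<cdot>\<^sub>m 1\<^sub>m n"
  obtains s where "unitary_cmat n (s \<cdot>\<^sub>m Y)"
proof -
  obtain r where r: "r > 0" and cr: "c = of_real r"
    using adj_mult_eq_scalar_pos[OF Y c] .
  define s where "s = complex_of_real (1 / sqrt r)"
  have "sqrt r * sqrt r = r"
    using r by simp
  then have "1 / sqrt r * (1 / sqrt r) * r = 1"
    using r by (simp add: divide_simps)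
  then have s: "cnj s * s * c = 1"
    unfolding s_def cr by (simp only: complex_cnj_complex_of_real of_real_mult[symmetric] of_real_1)
  define W where "W = s \<cdot>\<^sub>m Y"
  have W: "W \<in> carrier_mat n n"
    unfolding W_def using Y by simp
  have "cadj W * W = (cnj s * s * c) \<cdot>\<^sub>m 1\<^sub>m n"
    unfolding W_def using Y c
    by (simp add: cadj_smult mult_smult_assoc_mat[of _ n n _ n] mult_smult_distrib[of _ n n _ n]
        smult_smult_mat mult_ac)
  also have "\<dots> = 1\<^sub>m n"
    using s by simp
  finally have WW: "cadj W * W = 1\<^sub>m n" .
  have "W * cadj W = 1\<^sub>m n"
    by (rule mat_mult_left_right_inverse[OF cadj_carrier[OF W] W WW])
  with W WW have "unitary_cmat n W"
    unfolding unitary_cmat_def by simp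
  then show ?thesis
    using that unfolding W_def by blast
qed

lemma peripheral_eigenvalue_imp_gauge:
  assumes A: "\<And>k. k < d \<Longrightarrow> A k \<in> carrier_mat D D"
    and inj: "injective_mps d D A" and u: "unitary_cmat d u"
    and ev: "eigenvalue (transfer_u d D u A) z" and z: "cmod z = 1"
  obtains v where "unitary_cmat D v"
    "\<And>j. j < d \<Longrightarrow> phys_action d D u A j = z \<cdot>\<^sub>m (v * A j * cadj v)"
proof -
  let ?B = "phys_action d D u A"
  obtain Y where Y: "Y \<in> carrier_mat D D" "Y \<noteq> 0\<^sub>m D D"
    and eig: "msum D D d (\<lambda>j. cadj (A j) * Y * ?B j) = z \<cdot>\<^sub>m Y"
    using transfer_u_eigenvalueE[OF A ev] .
  obtain \<rho> where rho: "density_mat D \<rho>" "det \<rho> \<noteq> 0"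
    and fixed: "msum D D d (\<lambda>j. A j * \<rho> * cadj (A j)) = \<rho>"
    using inj unfolding injective_mps_def by blast
  have lc: "msum D D d (\<lambda>j. cadj (A j) * A j) = 1\<^sub>m D"
    using inj unfolding injective_mps_def left_canonical_def by blast
  have intertw: "Y * ?B j = z \<cdot>\<^sub>m (A j * Y)" if "j < d" for j
    by (rule left_eigenmatrix_intertwines[OF A lc rho fixed u z Y(1) eig that])
  have "msum D D d (\<lambda>j. cadj (A j) * (cadj Y * Y) * A j) = cadj Y * Y"
    by (rule intertwiner_adj_mult_fixed[OF A lc u z Y(1) intertw])
  then obtain c where "cadj Y * Y = c \<cdot>\<^sub>m 1\<^sub>m D"
    using inj mult_carrier_mat[OF cadj_carrier[OF Y(1)] Y(1)] unfolding injective_mps_def by blast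
  then obtain s where W: "unitary_cmat D (s \<cdot>\<^sub>m Y)"
    using unitary_cmat_smult_if_adj_mult_scalar[OF Y] by blast
  define v where "v = cadj (s \<cdot>\<^sub>m Y)"
  have "unitary_cmat D v"
    using W unfolding unitary_cmat_def v_def by auto
  moreover have "?B j = z \<cdot>\<^sub>m (v * A j * cadj v)" if "j < d" for j
  proof -
    have "s \<cdot>\<^sub>m Y * ?B j = z \<cdot>\<^sub>m (A j * (s \<cdot>\<^sub>m Y))"
      using Y(1) A[OF that]
      by (simp add: mult_smult_assoc_mat[of _ D D _ D] mult_smult_distrib[of _ D D _ D]
          intertw[OF that] smult_smult_mat mult.commute)
    from unitary_conj_of_intertwines[OF W A[OF that] phys_action_carrier this] show ?thesis
      unfolding v_def by simp
  qed
  ultimately show ?thesis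
    using that by blast
qed

lemma gauge_imp_transfer_u_eigenvalue:
  assumes A: "\<And>k. k < d \<Longrightarrow> A k \<in> carrier_mat D D"
    and rho: "density_mat D \<rho>" and fixed: "msum D D d (\<lambda>j. A j * \<rho> * cadj (A j)) = \<rho>"
    and v: "unitary_cmat D v"
    and gauge: "\<And>j. j < d \<Longrightarrow> phys_action d D u A j = c \<cdot>\<^sub>m (v * A j * cadj v)"
  shows "eigenvalue (transfer_u d D u A) c"
proof -
  have rc: "\<rho> \<in> carrier_mat D D" and tr: "ctrace \<rho> = 1"
    using rho unfolding density_mat_def by auto
  have vc: "v \<in> carrier_mat D D" and vv: "cadj v * v = 1\<^sub>m D"
    using v unfolding unitary_cmat_def by auto
  have cancel: "cadj v * (v * M) = M" if "M \<in> carrier_mat D D" for M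
  proof -
    have "cadj v * (v * M) = cadj v * v * M"
      using vc that by (simp add: assoc_mult_mat[of _ D D _ D _ D] cadj_carrier[of _ D D])
    then show ?thesis
      using vv that by simp
  qed
  have summand: "phys_action d D u A j * (v * \<rho>) * cadj (A j) = c \<cdot>\<^sub>m (v * (A j * \<rho> * cadj (A j)))"
    if "j < d" for j
    using A[OF that] vc rc vv
    by (simp add: gauge[OF that] mult_smult_assoc_mat[of _ D D _ D] assoc_mult_mat[of _ D D _ D _ D]
        mult_carrier_mat_square cadj_carrier[of _ D D] cancel)
  have "msum D D d (\<lambda>j. phys_action d D u A j * (v * \<rho>) * cadj (A j))
      = c \<cdot>\<^sub>m (v * msum D D d (\<lambda>j. A j * \<rho> * cadj (A j)))"
    using A vc rc
    by (simp add: summand msum_cong[OF summand] smult_msum mult_msum_distrib_left[of v D D]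
        mult_carrier_mat_square cadj_carrier[of _ D D])
  then have eig: "msum D D d (\<lambda>j. phys_action d D u A j * (v * \<rho>) * cadj (A j)) = c \<cdot>\<^sub>m (v * \<rho>)"
    by (simp add: fixed)
  have "v * \<rho> \<noteq> 0\<^sub>m D D"
  proof
    assume "v * \<rho> = 0\<^sub>m D D"
    then have "\<rho> = 0\<^sub>m D D"
      using cancel[OF rc] right_mult_zero_mat[OF cadj_carrier[OF vc]] by simp
    then show False
      using tr unfolding ctrace_def by simp
  qed
  then show ?thesis
    using transfer_u_eigenvalueI[OF A _ _ eig] vc rc by simp
qed

theorem lemma2:
  fixes d D :: nat and A :: "nat \<Rightarrow> complex mat" and u :: "complex mat"
  assumes "mps_tensor d D A"
    and "injective_mps d D A"
    and "unitary_cmat d u"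
  shows "(\<exists>z. eigenvalue (transfer_u d D u A) z \<and> cmod z = 1) \<longleftrightarrow>
         (\<exists>v (\<theta>::real). unitary_cmat D v \<and>
            (\<forall>j<d. msum D D d (\<lambda>k. u $$ (j,k) \<cdot>\<^sub>m A k)
                     = exp (\<i> * of_real \<theta>) \<cdot>\<^sub>m (v * A j * cadj v)))"
proof -
  have A: "\<And>k. k < d \<Longrightarrow> A k \<in> carrier_mat D D"
    using assms(1) unfolding mps_tensor_def by blast
  show ?thesis
  proof (rule iffI, goal_cases)
    case 1
    then obtain z where ev: "eigenvalue (transfer_u d D u A) z" and z: "cmod z = 1"
      by blast
    obtain v where "unitary_cmat D v" "\<And>j. j < d \<Longrightarrow> phys_action d D u A j = z \<cdot>\<^sub>m (v * A j * cadj v)"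
      using peripheral_eigenvalue_imp_gauge[OF A assms(2,3) ev z] by blast
    moreover have "exp (\<i> * of_real (Arg z)) = z"
      using rcis_cmod_Arg[of z] z by (simp add: rcis_def cis_conv_exp)
    ultimately show ?case
      unfolding phys_action_def by (intro exI[of _ v] exI[of _ "Arg z"]) simp
  next
    case 2
    then obtain v and \<theta> :: real where v: "unitary_cmat D v"
      and gauge: "\<And>j. j < d \<Longrightarrow> phys_action d D u A j = exp (\<i> * of_real \<theta>) \<cdot>\<^sub>m (v * A j * cadj v)"
      unfolding phys_action_def by blast
    obtain \<rho> where "density_mat D \<rho>" "msum D D d (\<lambda>j. A j * \<rho> * cadj (A j)) = \<rho>"
      using assms(2) unfolding injective_mps_def by blast
    from gauge_imp_transfer_u_eigenvalue[OF A this v gauge] show ?case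
      by (intro exI[of _ "exp (\<i> * of_real \<theta>)"]) simp
  qed
qed

end
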